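(* Let $E$ be a Banach $f$-algebra and let $(x_\alpha)_{\alpha\in A}$ and $(y_\beta)_{\beta\in A}$ be nets in $E$ such that $x_\alpha\xrightarrow{mw}x$ and $y_\beta\xrightarrow{mw}y$ for some $x,y\in E$, and such that $(x_\alpha)$ or $(y_\beta)$ is monotone. Then $x_\alpha y_\beta\xrightarrow{mw}xy$ (as a net indexed by $(\alpha,\beta)\in A\times A$).
   Context: All vector lattices are real and Archimedean. An $f$-algebra is a vector lattice with an associative multiplication making it an algebra, such that products of positive elements are positive and $x\wedge y=0$ implies $(xz)\wedge y=(zx)\wedge y=0$ for all $z\ge0$. A Banach $f$-algebra is an $f$-algebra which is a Banach lattice with $\|xy\|\le\|x\|\|y\|$. A net $(x_\alpha)$ in $E$ $mw$-converges to $x$ ($x_\alpha\xrightarrow{mw}x$) if $|x_\alpha-x|u\to0$ weakly for every $u\in E_+$. A net is monotone if it is increasing or decreasing. *)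

theory Defs
  imports Complex_Main
begin

definition labs :: "'a::{lattice, uminus} \<Rightarrow> 'a" where
  "labs x = sup x (- x)"

definition vector_lattice :: "'a::{real_vector, lattice} itself \<Rightarrow> bool" where
  "vector_lattice _ \<longleftrightarrow>
     (\<forall>x y z::'a. x \<le> y \<longrightarrow> x + z \<le> y + z) \<and>
     (\<forall>(x::'a) (c::real). 0 \<le> x \<and> 0 \<le> c \<longrightarrow> 0 \<le> c *\<^sub>R x) \<and>
     (\<forall>x y::'a. 0 \<le> x \<and> (\<forall>n::nat. real n *\<^sub>R x \<le> y) \<longrightarrow> x = 0)"

text \<open>f-algebra: associative multiplication (ring structure of the type class),
  positive products of positives, and the f-algebra disjointness condition.\<close>
definition f_algebra :: "'a::{real_algebra, lattice} itself \<Rightarrow> bool" where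
  "f_algebra T \<longleftrightarrow> vector_lattice T \<and>
     (\<forall>x y::'a. 0 \<le> x \<and> 0 \<le> y \<longrightarrow> 0 \<le> x * y) \<and>
     (\<forall>x y z::'a. inf x y = 0 \<and> 0 \<le> z \<longrightarrow> inf (x * z) y = 0 \<and> inf (z * x) y = 0)"

definition banach_f_algebra :: "'a::{real_normed_algebra, banach, lattice} itself \<Rightarrow> bool" where
  "banach_f_algebra T \<longleftrightarrow> f_algebra T \<and>
     (\<forall>x y::'a. labs x \<le> labs y \<longrightarrow> norm x \<le> norm y)"

definition directed_set :: "('i \<Rightarrow> 'i \<Rightarrow> bool) \<Rightarrow> bool" where
  "directed_set le \<longleftrightarrow> (\<exists>a. le a a) \<and> (\<forall>a. le a a) \<and>
     (\<forall>a b c. le a b \<and> le b c \<longrightarrow> le a c) \<and> (\<forall>a b. \<exists>c. le a c \<and> le b c)"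

definition net_filter :: "('i \<Rightarrow> 'i \<Rightarrow> bool) \<Rightarrow> 'i filter" where
  "net_filter le = (INF a. principal {b. le a b})"

definition prod_order :: "('i \<Rightarrow> 'i \<Rightarrow> bool) \<Rightarrow> ('j \<Rightarrow> 'j \<Rightarrow> bool) \<Rightarrow> 'i \<times> 'j \<Rightarrow> 'i \<times> 'j \<Rightarrow> bool" where
  "prod_order le1 le2 p q \<longleftrightarrow> le1 (fst p) (fst q) \<and> le2 (snd p) (snd q)"

definition weak_conv :: "('i \<Rightarrow> 'a::real_normed_vector) \<Rightarrow> 'a \<Rightarrow> 'i filter \<Rightarrow> bool" where
  "weak_conv x l F \<longleftrightarrow> (\<forall>f::'a \<Rightarrow> real. bounded_linear f \<longrightarrow> ((\<lambda>i. f (x i)) \<longlongrightarrow> f l) F)"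

definition mw_conv :: "('i \<Rightarrow> 'a::{real_normed_algebra, lattice}) \<Rightarrow> 'a \<Rightarrow> 'i filter \<Rightarrow> bool" where
  "mw_conv x l F \<longleftrightarrow> (\<forall>u::'a. 0 \<le> u \<longrightarrow> weak_conv (\<lambda>i. labs (x i - l) * u) 0 F)"

definition monotone_net :: "('i \<Rightarrow> 'i \<Rightarrow> bool) \<Rightarrow> ('i \<Rightarrow> 'a::order) \<Rightarrow> bool" where
  "monotone_net le x \<longleftrightarrow> (\<forall>a b. le a b \<longrightarrow> x a \<le> x b) \<or> (\<forall>a b. le a b \<longrightarrow> x b \<le> x a)"

end

theory Submission
  imports Defs "HOL-Library.Lattice_Algebras"
begin

text \<open>
  By the Riesz--Kantorovich formula \<open>f\<^sup>+(x) = sup {f y | 0 \<le> y \<le> x}\<close>, every bounded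
  functional is a difference of positive ones, so mw-convergence only has to be tested against
  positive functionals \<open>h\<close>. The estimate
  \<open>|x\<^sub>\<alpha> y\<^sub>\<beta> - x y| \<le> |x\<^sub>\<alpha> - x| |y\<^sub>\<beta> - y| + |x| |y\<^sub>\<beta> - y| + |x\<^sub>\<alpha> - x| |y|\<close>
  reduces the claim to the cross term, the other two terms being controlled by one net alone.
  If \<open>(x\<^sub>\<alpha>)\<close> increases, then \<open>h ((x - x\<^sub>\<alpha>) w) \<ge> 0\<close> for all \<open>w \<ge> 0\<close>, because
  \<open>h (x\<^sub>\<gamma> w)\<close> increases to \<open>h (x w)\<close>; together with
  \<open>|x\<^sub>\<alpha> - x| \<le> (x\<^sub>\<alpha> - x\<^sub>\<alpha>\<^sub>0) + |x - x\<^sub>\<alpha>\<^sub>0|\<close> this gives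
  \<open>h (|x\<^sub>\<alpha> - x| w) \<le> 2 h (|x - x\<^sub>\<alpha>\<^sub>0| w)\<close> for \<open>\<alpha> \<ge> \<alpha>\<^sub>0\<close>. With
  \<open>w = |y\<^sub>\<beta> - y| u\<close> the cross term is thus dominated by a term that tends to \<open>0\<close> by the
  mw-convergence of \<open>(y\<^sub>\<beta>)\<close>; the other monotone case is symmetric.
\<close>

lemma eventually_net_filter:
  assumes "directed_set le"
  shows "eventually P (net_filter le) \<longleftrightarrow> (\<exists>a. \<forall>b. le a b \<longrightarrow> P b)"
proof -
  have "eventually P (INF a\<in>UNIV. principal {b. le a b}) \<longleftrightarrow>
      (\<exists>a\<in>UNIV. eventually P (principal {b. le a b}))"
  proof (rule eventually_INF_base)
    fix a b
    obtain c where "le a c" "le b c"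
      using assms unfolding directed_set_def by blast
    then have "{d. le c d} \<subseteq> {d. le a d} \<inter> {d. le b d}"
      using assms unfolding directed_set_def by blast
    then show "\<exists>c\<in>UNIV. principal {d. le c d} \<le> inf (principal {d. le a d}) (principal {d. le b d})"
      by auto
  qed simp
  then show ?thesis
    unfolding net_filter_def by (simp add: eventually_principal)
qed

lemma net_filter_nontrivial:
  assumes "directed_set le"
  shows "net_filter le \<noteq> bot"
proof
  assume "net_filter le = bot"
  then obtain a where "\<forall>b. le a b \<longrightarrow> False"
    using eventually_net_filter[OF assms, of "\<lambda>_. False"] by auto
  then show False
    using assms unfolding directed_set_def by blast
qed

lemma eventually_le_net_filter:
  assumes "directed_set le"
  shows "eventually (\<lambda>b. le a b) (net_filter le)"
  using assms unfolding eventually_net_filter[OF assms] directed_set_def by blast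

lemma directed_set_prod_order:
  fixes le1 :: "'i \<Rightarrow> 'i \<Rightarrow> bool" and le2 :: "'j \<Rightarrow> 'j \<Rightarrow> bool"
  assumes "directed_set le1" and "directed_set le2"
  shows "directed_set (prod_order le1 le2)"
  unfolding directed_set_def
proof (intro conjI allI impI)
  fix p q r :: "'i \<times> 'j"
  show "prod_order le1 le2 p p"
    using assms by (simp add: directed_set_def prod_order_def)
  then show "\<exists>p. prod_order le1 le2 p p"
    by blast
  show "prod_order le1 le2 p r" if "prod_order le1 le2 p q \<and> prod_order le1 le2 q r"
    using assms that unfolding directed_set_def prod_order_def by blast
  obtain a where "le1 (fst p) a" "le1 (fst q) a"
    using assms(1) unfolding directed_set_def by blast
  moreover obtain b where "le2 (snd p) b" "le2 (snd q) b"
    using assms(2) unfolding directed_set_def by blast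
  ultimately show "\<exists>r. prod_order le1 le2 p r \<and> prod_order le1 le2 q r"
    by (intro exI[of _ "(a, b)"]) (simp add: prod_order_def)
qed

lemma filterlim_fst_net_filter:
  assumes "directed_set le1" and "directed_set le2"
  shows "filterlim fst (net_filter le1) (net_filter (prod_order le1 le2))"
  unfolding filterlim_iff
proof (intro allI impI)
  fix P assume "eventually P (net_filter le1)"
  then obtain a where "\<forall>a'. le1 a a' \<longrightarrow> P a'"
    using eventually_net_filter[OF assms(1)] by blast
  moreover obtain b where "le2 b b"
    using assms(2) unfolding directed_set_def by blast
  ultimately show "eventually (\<lambda>p. P (fst p)) (net_filter (prod_order le1 le2))"
    unfolding eventually_net_filter[OF directed_set_prod_order[OF assms]] prod_order_def
    by (intro exI[of _ "(a, b)"]) simp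
qed

lemma filterlim_snd_net_filter:
  assumes "directed_set le1" and "directed_set le2"
  shows "filterlim snd (net_filter le2) (net_filter (prod_order le1 le2))"
  unfolding filterlim_iff
proof (intro allI impI)
  fix P assume "eventually P (net_filter le2)"
  then obtain b where "\<forall>b'. le2 b b' \<longrightarrow> P b'"
    using eventually_net_filter[OF assms(2)] by blast
  moreover obtain a where "le1 a a"
    using assms(1) unfolding directed_set_def by blast
  ultimately show "eventually (\<lambda>p. P (snd p)) (net_filter (prod_order le1 le2))"
    unfolding eventually_net_filter[OF directed_set_prod_order[OF assms]] prod_order_def
    by (intro exI[of _ "(a, b)"]) simp
qed

definition positive_functional :: "('a::{real_normed_vector, order} \<Rightarrow> real) \<Rightarrow> bool" where
  "positive_functional h \<longleftrightarrow> bounded_linear h \<and> (\<forall>x. 0 \<le> x \<longrightarrow> 0 \<le> h x)"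

text \<open>The Riesz--Kantorovich formula; only its values on the positive cone matter.\<close>

definition functional_pos_part :: "('a::{real_normed_vector, order} \<Rightarrow> real) \<Rightarrow> 'a \<Rightarrow> real" where
  "functional_pos_part f x = (SUP y \<in> {y. 0 \<le> y \<and> y \<le> x}. f y)"

locale normed_lattice_algebra =
  lat: lattice_ring labs "(+)" "0::'a::{real_normed_algebra, lattice}" "(-)" uminus "(\<le>)" "(<)"
    inf sup "(*)" +
  assumes scaleR_nonneg: "0 \<le> (x::'a) \<Longrightarrow> 0 \<le> c \<Longrightarrow> 0 \<le> c *\<^sub>R x"
    and norm_mono: "labs (x::'a) \<le> labs y \<Longrightarrow> norm x \<le> norm y"

lemma banach_f_algebra_normed_lattice_algebra:
  assumes "banach_f_algebra TYPE('a::{real_normed_algebra, banach, lattice})"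
  shows "normed_lattice_algebra TYPE('a)"
proof -
  have vl: "vector_lattice TYPE('a)" and fa: "f_algebra TYPE('a)"
    and norm_mono: "labs x \<le> labs y \<Longrightarrow> norm x \<le> norm y" for x y :: 'a
    using assms unfolding banach_f_algebra_def f_algebra_def by auto
  have add_right_mono: "x \<le> y \<Longrightarrow> x + z \<le> y + z"
    and scaleR_nonneg: "0 \<le> x \<Longrightarrow> 0 \<le> c \<Longrightarrow> 0 \<le> c *\<^sub>R x" for x y z :: 'a and c :: real
    using vl unfolding vector_lattice_def by auto
  have mult_nonneg: "0 \<le> x \<Longrightarrow> 0 \<le> y \<Longrightarrow> 0 \<le> x * y" for x y :: 'a
    using fa unfolding f_algebra_def by auto
  have le_iff_diff_nonneg: "x \<le> y \<longleftrightarrow> 0 \<le> y - x" for x y :: 'a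
    using add_right_mono[of x y "- x"] add_right_mono[of 0 "y - x" x] by auto
  show ?thesis
  proof unfold_locales
    fix a b c :: 'a
    show "a \<le> b \<Longrightarrow> c + a \<le> c + b"
      using add_right_mono[of a b c] by (simp add: add.commute)
    show "labs a = sup a (- a)"
      by (rule labs_def)
    assume "a \<le> b" and "0 \<le> c"
    then have "0 \<le> c * (b - a)" and "0 \<le> (b - a) * c"
      using mult_nonneg le_iff_diff_nonneg by blast+
    then show "c * a \<le> c * b" and "a * c \<le> b * c"
      by (simp_all only: le_iff_diff_nonneg[of "c * a"] le_iff_diff_nonneg[of "a * c"]
          right_diff_distrib left_diff_distrib)
  qed (fact scaleR_nonneg norm_mono)+
qed

context normed_lattice_algebra
begin

lemma norm_le_norm_of_nonneg:
  assumes "0 \<le> x" and "x \<le> (y::'a)"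
  shows "norm x \<le> norm y"
  using assms norm_mono[of x y] by (simp add: lat.abs_of_nonneg)

lemma abs_mult_le: "labs (a * b) \<le> labs a * labs (b::'a)"
proof -
  let ?pp = "lat.pprt a * lat.pprt b" and ?pn = "lat.pprt a * lat.nprt b"
    and ?np = "lat.nprt a * lat.pprt b" and ?nn = "lat.nprt a * lat.nprt b"
  have "a * b = ?pp + ?pn + ?np + ?nn"
    by (subst lat.prts[of a], subst lat.prts[of b]) (simp add: algebra_simps)
  then have "labs (a * b) \<le> labs (?pp + ?pn + ?np) + labs ?nn"
    by (simp only: lat.abs_triangle_ineq)
  also have "\<dots> \<le> labs (?pp + ?pn) + labs ?np + labs ?nn"
    by (intro lat.add_right_mono lat.abs_triangle_ineq)
  also have "\<dots> \<le> labs ?pp + labs ?pn + labs ?np + labs ?nn"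
    by (intro lat.add_right_mono lat.abs_triangle_ineq)
  also have "\<dots> = ?pp - ?pn - ?np + ?nn"
    by (simp add: lat.mult_nonneg_nonpos lat.mult_nonpos_nonneg lat.mult_nonpos_nonpos)
  also have "\<dots> = labs a * labs b"
    by (simp add: lat.abs_prts algebra_simps)
  finally show ?thesis .
qed

lemma riesz_decomposition:
  assumes "0 \<le> y" and "y \<le> a + b" and "0 \<le> a" and "0 \<le> (b::'a)"
  obtains y1 y2 where "y = y1 + y2" and "0 \<le> y1" and "y1 \<le> a" and "0 \<le> y2" and "y2 \<le> b"
proof
  show "y = inf y a + (y - inf y a)"
    by (simp only: add.commute[of "inf y a"] diff_add_cancel)
  show "0 \<le> inf y a" and "inf y a \<le> a"
    using assms by simp_all
  show "0 \<le> y - inf y a"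
    using inf_le1[of y a] by (simp only: lat.diff_ge_0_iff_ge)
  have "y - inf y a = sup 0 (y - a)"
    by (simp add: lat.diff_inf_eq_sup lat.add_sup_distrib_left)
  then show "y - inf y a \<le> b"
    using assms by (simp add: lat.diff_le_eq add.commute)
qed

lemma positive_functional_mono:
  assumes "positive_functional h" and "x \<le> (y::'a)"
  shows "h x \<le> h y"
proof -
  interpret h: bounded_linear h
    using assms(1) by (simp add: positive_functional_def)
  have "0 \<le> h (y - x)"
    using assms by (simp add: positive_functional_def)
  then show ?thesis
    by (simp add: h.diff)
qed

lemma abs_positive_functional_le:
  assumes "positive_functional h"
  shows "\<bar>h x\<bar> \<le> h (labs (x::'a))"
proof -
  interpret h: bounded_linear h
    using assms by (simp add: positive_functional_def)
  have "h (- labs x) \<le> h x" and "h x \<le> h (labs x)"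
    using lat.abs_ge_minus_self[of x] lat.abs_ge_self[of x]
    by (simp_all add: positive_functional_mono[OF assms] lat.minus_le_iff)
  then show ?thesis
    by (simp add: h.neg abs_le_iff)
qed

lemma positive_functional_mult_left:
  assumes "positive_functional h" and "0 \<le> (c::'a)"
  shows "positive_functional (\<lambda>x. h (c * x))"
  using assms bounded_linear_compose[of h, OF _ bounded_linear_mult_right[of c]]
  by (simp add: positive_functional_def lat.mult_nonneg_nonneg)

lemma norm_pprt_le: "norm (lat.pprt x) \<le> norm (x::'a)"
  and norm_nprt_le: "norm (lat.nprt x) \<le> norm (x::'a)"
proof -
  have "lat.pprt x \<le> labs x" and "- lat.nprt x \<le> labs x"
    using lat.nprt_le_zero[of x] lat.zero_le_pprt[of x] by (simp_all add: lat.abs_prts lat.le_diff_eq)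
  then show "norm (lat.pprt x) \<le> norm x" and "norm (lat.nprt x) \<le> norm x"
    using norm_mono[of "lat.pprt x" x] norm_mono[of "lat.nprt x" x] by (simp_all add: lat.abs_of_nonpos)
qed

lemma cone_extension_diff:
  fixes p :: "'a \<Rightarrow> real"
  assumes add: "\<And>x y. 0 \<le> x \<Longrightarrow> 0 \<le> y \<Longrightarrow> p (x + y) = p x + p y"
    and "0 \<le> a" and "0 \<le> b"
  shows "p (lat.pprt (a - b)) - p (- lat.nprt (a - b)) = p a - p b"
proof -
  have "lat.pprt (a - b) + b = a + - lat.nprt (a - b)"
    using lat.prts[of "a - b"] by (simp add: algebra_simps)
  then have "p (lat.pprt (a - b)) + p b = p a + p (- lat.nprt (a - b))"
    using add[of "lat.pprt (a - b)" b] add[of a "- lat.nprt (a - b)"] assms(2,3) by simp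
  then show ?thesis
    by linarith
qed

lemma cone_extension_linear:
  assumes add: "\<And>x y. 0 \<le> x \<Longrightarrow> 0 \<le> y \<Longrightarrow> p (x + y) = p x + p y"
    and scale: "\<And>c x. 0 < c \<Longrightarrow> 0 \<le> x \<Longrightarrow> p (c *\<^sub>R x) = c * p x"
  shows "linear (\<lambda>x. p (lat.pprt x) - p (- lat.nprt (x::'a)))" (is "linear ?g")
proof (rule linearI)
  note diff = cone_extension_diff[OF add]
  fix x y :: 'a and c :: real
  have "(lat.pprt x + lat.pprt y) - (- lat.nprt x + - lat.nprt y)
      = (lat.pprt x + lat.nprt x) + (lat.pprt y + lat.nprt y)"
    by (simp add: algebra_simps)
  then have "?g (x + y) = ?g ((lat.pprt x + lat.pprt y) - (- lat.nprt x + - lat.nprt y))"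
    by (simp flip: lat.prts)
  also have "\<dots> = p (lat.pprt x + lat.pprt y) - p (- lat.nprt x + - lat.nprt y)"
    by (intro diff lat.add_nonneg_nonneg) simp_all
  finally show "?g (x + y) = ?g x + ?g y"
    using add[of "lat.pprt x" "lat.pprt y"] add[of "- lat.nprt x" "- lat.nprt y"] by simp
  show "?g (c *\<^sub>R x) = c *\<^sub>R ?g x"
  proof (cases c "0::real" rule: linorder_cases)
    case less
    have "c *\<^sub>R x = (- c) *\<^sub>R (- lat.nprt x) - (- c) *\<^sub>R lat.pprt x"
      using arg_cong[OF lat.prts[of x], of "scaleR c"] by (simp add: scaleR_right_distrib)
    then have "?g (c *\<^sub>R x) = p ((- c) *\<^sub>R (- lat.nprt x)) - p ((- c) *\<^sub>R lat.pprt x)"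
      by (simp only:) (intro diff scaleR_nonneg; use less in simp)
    then show ?thesis
      using less scale[of "- c" "lat.pprt x"] scale[of "- c" "- lat.nprt x"]
      by (simp add: algebra_simps)
  next
    case greater
    have "c *\<^sub>R x = c *\<^sub>R lat.pprt x - c *\<^sub>R (- lat.nprt x)"
      using arg_cong[OF lat.prts[of x], of "scaleR c"] by (simp add: scaleR_right_distrib)
    then have "?g (c *\<^sub>R x) = p (c *\<^sub>R lat.pprt x) - p (c *\<^sub>R (- lat.nprt x))"
      by (simp only:) (intro diff scaleR_nonneg; use greater in simp)
    then show ?thesis
      using greater scale[of c "lat.pprt x"] scale[of c "- lat.nprt x"]
      by (simp add: algebra_simps)
  qed simp
qed

lemma positive_functional_extension:
  assumes add: "\<And>x y. 0 \<le> x \<Longrightarrow> 0 \<le> y \<Longrightarrow> p (x + y) = p x + p y"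
    and scale: "\<And>c x. 0 < c \<Longrightarrow> 0 \<le> x \<Longrightarrow> p (c *\<^sub>R x) = c * p x"
    and nonneg: "\<And>x. 0 \<le> x \<Longrightarrow> 0 \<le> p x"
    and bound: "\<And>x. 0 \<le> x \<Longrightarrow> p x \<le> K * norm (x::'a)" and "0 \<le> K"
  obtains g where "positive_functional g" and "\<And>x. 0 \<le> x \<Longrightarrow> g x = p x"
proof
  let ?g = "\<lambda>x. p (lat.pprt x) - p (- lat.nprt x)"
  have lin: "linear ?g"
    using cone_extension_linear[OF add scale] .
  show g_pos: "?g x = p x" if "0 \<le> x" for x
    using cone_extension_diff[OF add that order_refl] add[of 0 0] by simp
  have "norm (?g x) \<le> norm x * (2 * K)" for x
  proof -
    have "p (lat.pprt x) \<le> K * norm x"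
      using order_trans[OF bound[of "lat.pprt x"] mult_left_mono[OF norm_pprt_le \<open>0 \<le> K\<close>]]
      by simp
    moreover have "p (- lat.nprt x) \<le> K * norm x"
      using bound[of "- lat.nprt x"] mult_left_mono[OF norm_nprt_le \<open>0 \<le> K\<close>, of x]
      by simp
    ultimately show ?thesis
      using nonneg[of "lat.pprt x"] nonneg[of "- lat.nprt x"]
      by (simp add: abs_le_iff algebra_simps)
  qed
  then have "bounded_linear ?g"
    by (rule bounded_linear_intro[OF linear_add[OF lin] linear_scale[OF lin]])
  then show "positive_functional ?g"
    using g_pos nonneg by (simp add: positive_functional_def)
qed

lemma functional_pos_part_upper:
  assumes "bounded_linear f" and "0 \<le> y" and "y \<le> (x::'a)"
  shows "f y \<le> functional_pos_part f x"
proof -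
  obtain K where "0 \<le> K" and K: "\<And>z. norm (f z) \<le> norm z * K"
    using bounded_linear.nonneg_bounded[OF assms(1)] by blast
  have "f z \<le> norm x * K" if "0 \<le> z" and "z \<le> x" for z
  proof -
    have "f z \<le> norm (f z)"
      by simp
    also have "\<dots> \<le> norm z * K"
      by (rule K)
    also have "\<dots> \<le> norm x * K"
      by (rule mult_right_mono[OF norm_le_norm_of_nonneg[OF that] \<open>0 \<le> K\<close>])
    finally show ?thesis .
  qed
  then have "bdd_above (f ` {z. 0 \<le> z \<and> z \<le> x})"
    by (intro bdd_aboveI[where M = "norm x * K"]) auto
  then show ?thesis
    unfolding functional_pos_part_def using assms(2,3) by (auto intro: cSUP_upper)
qed

lemma functional_pos_part_least:
  assumes "0 \<le> (x::'a)" and "\<And>y. 0 \<le> y \<Longrightarrow> y \<le> x \<Longrightarrow> f y \<le> c"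
  shows "functional_pos_part f x \<le> c"
  unfolding functional_pos_part_def using assms by (intro cSUP_least) auto

lemma functional_pos_part_add:
  assumes f: "bounded_linear f" and "0 \<le> x" and "0 \<le> (y::'a)"
  shows "functional_pos_part f (x + y) = functional_pos_part f x + functional_pos_part f y"
proof (rule antisym)
  interpret f: bounded_linear f by (fact f)
  show "functional_pos_part f (x + y) \<le> functional_pos_part f x + functional_pos_part f y"
  proof (rule functional_pos_part_least)
    show "0 \<le> x + y"
      using assms by simp
    fix z assume "0 \<le> z" and "z \<le> x + y"
    then obtain z1 z2 where "z = z1 + z2" "0 \<le> z1" "z1 \<le> x" "0 \<le> z2" "z2 \<le> y"
      using riesz_decomposition assms by blast
    then show "f z \<le> functional_pos_part f x + functional_pos_part f y"
      by (simp add: f.add add_mono functional_pos_part_upper[OF f])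
  qed
  have "functional_pos_part f y \<le> functional_pos_part f (x + y) - functional_pos_part f x"
  proof (rule functional_pos_part_least[OF \<open>0 \<le> y\<close>])
    fix z2 assume z2: "0 \<le> z2" "z2 \<le> y"
    have "functional_pos_part f x \<le> functional_pos_part f (x + y) - f z2"
    proof (rule functional_pos_part_least[OF \<open>0 \<le> x\<close>])
      fix z1 assume "0 \<le> z1" "z1 \<le> x"
      with z2 have "f (z1 + z2) \<le> functional_pos_part f (x + y)"
        by (intro functional_pos_part_upper[OF f] lat.add_mono) simp_all
      then show "f z1 \<le> functional_pos_part f (x + y) - f z2"
        by (simp add: f.add)
    qed
    then show "f z2 \<le> functional_pos_part f (x + y) - functional_pos_part f x"
      by simp
  qed
  then show "functional_pos_part f x + functional_pos_part f y \<le> functional_pos_part f (x + y)"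
    by simp
qed

lemma scaleR_le_scaleR_iff:
  assumes "0 < c"
  shows "c *\<^sub>R x \<le> c *\<^sub>R y \<longleftrightarrow> x \<le> (y::'a)"
proof -
  have mono: "c' *\<^sub>R x' \<le> c' *\<^sub>R y'" if "x' \<le> y'" and "0 < c'" for x' y' :: 'a and c'
    using scaleR_nonneg[of "y' - x'" c'] that by (simp add: scaleR_diff_right)
  show ?thesis
    using mono[of x y c] mono[of "c *\<^sub>R x" "c *\<^sub>R y" "inverse c"] assms by auto
qed

lemma functional_pos_part_scaleR:
  assumes f: "bounded_linear f" and "0 < c" and "0 \<le> (x::'a)"
  shows "functional_pos_part f (c *\<^sub>R x) = c * functional_pos_part f x"
proof (rule antisym)
  interpret f: bounded_linear f by (fact f)
  have scaled: "0 \<le> c *\<^sub>R z \<and> c *\<^sub>R z \<le> c *\<^sub>R x \<longleftrightarrow> 0 \<le> z \<and> z \<le> x" for z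
    using scaleR_le_scaleR_iff[OF \<open>0 < c\<close>, of 0 z] scaleR_le_scaleR_iff[OF \<open>0 < c\<close>, of z x]
    by simp
  show "functional_pos_part f (c *\<^sub>R x) \<le> c * functional_pos_part f x"
  proof (rule functional_pos_part_least)
    show "0 \<le> c *\<^sub>R x"
      using scaled[of x] \<open>0 \<le> x\<close> by simp
    fix z assume "0 \<le> z" and "z \<le> c *\<^sub>R x"
    then have "f (inverse c *\<^sub>R z) \<le> functional_pos_part f x"
      using scaled[of "inverse c *\<^sub>R z"] \<open>0 < c\<close>
      by (intro functional_pos_part_upper[OF f]) auto
    then show "f z \<le> c * functional_pos_part f x"
      using \<open>0 < c\<close> by (simp add: f.scaleR field_simps)
  qed
  have "functional_pos_part f x \<le> functional_pos_part f (c *\<^sub>R x) / c"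
  proof (rule functional_pos_part_least[OF \<open>0 \<le> x\<close>])
    fix z assume "0 \<le> z" and "z \<le> x"
    then have "f (c *\<^sub>R z) \<le> functional_pos_part f (c *\<^sub>R x)"
      using scaled[of z] by (intro functional_pos_part_upper[OF f]) auto
    then show "f z \<le> functional_pos_part f (c *\<^sub>R x) / c"
      using \<open>0 < c\<close> by (simp add: f.scaleR field_simps)
  qed
  then show "c * functional_pos_part f x \<le> functional_pos_part f (c *\<^sub>R x)"
    using \<open>0 < c\<close> by (simp add: field_simps)
qed

lemma bounded_linear_diff_positive_functionals:
  assumes f: "bounded_linear (f::'a \<Rightarrow> real)"
  obtains g where "positive_functional g" and "positive_functional (\<lambda>x. g x - f x)"
proof -
  interpret f: bounded_linear f by (fact f)
  obtain K where "0 \<le> K" and K: "\<And>x. norm (f x) \<le> norm x * K"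
    using f.nonneg_bounded by blast
  have "functional_pos_part f x \<le> K * norm x" if "0 \<le> x" for x
  proof (rule functional_pos_part_least[OF that])
    fix y assume "0 \<le> y" and "y \<le> x"
    have "f y \<le> norm y * K"
      using K[of y] by simp
    also have "\<dots> \<le> norm x * K"
      using norm_le_norm_of_nonneg[OF \<open>0 \<le> y\<close> \<open>y \<le> x\<close>] \<open>0 \<le> K\<close>
      by (rule mult_right_mono)
    finally show "f y \<le> K * norm x"
      by (simp add: mult.commute)
  qed
  moreover have "0 \<le> functional_pos_part f x" if "0 \<le> x" for x
    using functional_pos_part_upper[OF f order_refl that] by (simp add: f.zero)
  ultimately obtain g where g: "positive_functional g"
    and g_eq: "\<And>x. 0 \<le> x \<Longrightarrow> g x = functional_pos_part f x"
    using positive_functional_extension[OF functional_pos_part_add[OF f]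
        functional_pos_part_scaleR[OF f] _ _ \<open>0 \<le> K\<close>]
    by blast
  have "positive_functional (\<lambda>x. g x - f x)"
    using g bounded_linear_sub[OF _ f] functional_pos_part_upper[OF f _ order_refl] g_eq
    by (simp add: positive_functional_def)
  with g show thesis
    by (rule that)
qed

lemma weak_conv_zero_iff_positive_functionals:
  "weak_conv z (0::'a) F \<longleftrightarrow> (\<forall>h. positive_functional h \<longrightarrow> ((\<lambda>i. h (z i)) \<longlongrightarrow> 0) F)"
proof
  assume "weak_conv z 0 F"
  then show "\<forall>h. positive_functional h \<longrightarrow> ((\<lambda>i. h (z i)) \<longlongrightarrow> 0) F"
    by (auto simp: weak_conv_def positive_functional_def linear_0[OF bounded_linear.linear])
next
  assume pos: "\<forall>h. positive_functional h \<longrightarrow> ((\<lambda>i. h (z i)) \<longlongrightarrow> 0) F"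
  show "weak_conv z 0 F"
    unfolding weak_conv_def
  proof (intro allI impI)
    fix f :: "'a \<Rightarrow> real"
    assume f: "bounded_linear f"
    obtain g where "positive_functional g" and "positive_functional (\<lambda>x. g x - f x)"
      using bounded_linear_diff_positive_functionals[OF f] .
    with pos have "((\<lambda>i. g (z i) - (g (z i) - f (z i))) \<longlongrightarrow> 0 - 0) F"
      by (intro tendsto_diff) auto
    then show "((\<lambda>i. f (z i)) \<longlongrightarrow> f 0) F"
      using f by (simp add: linear_0[OF bounded_linear.linear])
  qed
qed

lemma mw_conv_iff_positive_functionals:
  "mw_conv xs (x::'a) F \<longleftrightarrow>
    (\<forall>u h. 0 \<le> u \<longrightarrow> positive_functional h \<longrightarrow> ((\<lambda>i. h (labs (xs i - x) * u)) \<longlongrightarrow> 0) F)"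
  unfolding mw_conv_def weak_conv_zero_iff_positive_functionals by blast

lemma mw_conv_positive_functional_tendsto:
  assumes "mw_conv xs x F" and "0 \<le> w" and h: "positive_functional h"
  shows "((\<lambda>i. h (xs i * w)) \<longlongrightarrow> h ((x::'a) * w)) F"
proof -
  interpret h: bounded_linear h
    using h by (simp add: positive_functional_def)
  have "((\<lambda>i. h (labs (xs i - x) * w)) \<longlongrightarrow> 0) F"
    using assms unfolding mw_conv_iff_positive_functionals by blast
  moreover have "\<forall>i. norm (h ((xs i - x) * w)) \<le> norm (h (labs (xs i - x) * w)) * 1"
  proof
    fix i
    have "\<bar>h ((xs i - x) * w)\<bar> \<le> h (labs ((xs i - x) * w))"
      by (rule abs_positive_functional_le[OF h])
    also have "\<dots> \<le> h (labs (xs i - x) * w)"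
      using positive_functional_mono[OF h abs_mult_le[of "xs i - x" w]] \<open>0 \<le> w\<close>
      by (simp add: lat.abs_of_nonneg)
    finally show "norm (h ((xs i - x) * w)) \<le> norm (h (labs (xs i - x) * w)) * 1"
      by simp
  qed
  ultimately have "((\<lambda>i. h ((xs i - x) * w)) \<longlongrightarrow> 0) F"
    by (rule tendsto_0_le[OF _ always_eventually])
  then have "((\<lambda>i. h ((xs i - x) * w) + h (x * w)) \<longlongrightarrow> 0 + h (x * w)) F"
    by (intro tendsto_add tendsto_const)
  moreover have "h ((xs i - x) * w) + h (x * w) = h (xs i * w)" for i
    by (simp add: h.add[symmetric] left_diff_distrib)
  ultimately show ?thesis
    by simp
qed

lemma increasing_net_le_mw_limit:
  assumes "directed_set le" and "mw_conv xs x (net_filter le)"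
    and "\<And>a b. le a b \<Longrightarrow> xs a \<le> xs b"
    and "0 \<le> w" and "positive_functional h"
  shows "h (xs a * w) \<le> h ((x::'a) * w)"
proof (rule tendsto_lowerbound)
  show "((\<lambda>b. h (xs b * w)) \<longlongrightarrow> h (x * w)) (net_filter le)"
    using mw_conv_positive_functional_tendsto assms(2,4,5) .
  show "\<forall>\<^sub>F b in net_filter le. h (xs a * w) \<le> h (xs b * w)"
    unfolding eventually_net_filter[OF assms(1)]
    using positive_functional_mono[OF assms(5) lat.mult_right_mono[OF assms(3) assms(4)]]
    by blast
  show "net_filter le \<noteq> bot"
    using net_filter_nontrivial assms(1) .
qed

lemma increasing_mw_conv_bound:
  assumes "directed_set le" and "mw_conv xs x (net_filter le)"
    and inc: "\<And>a b. le a b \<Longrightarrow> xs a \<le> xs b" and "le a0 a"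
    and "0 \<le> w" and h: "positive_functional h"
  shows "h (labs (xs a - x) * w) \<le> 2 * h (labs (x - xs a0) * (w::'a))"
proof -
  interpret h: bounded_linear h
    using h by (simp add: positive_functional_def)
  let ?q = "x - xs a0"
  have "labs (xs a - x) = labs ((xs a - xs a0) + - ?q)"
    by simp
  also have "\<dots> \<le> labs (xs a - xs a0) + labs (- ?q)"
    by (rule lat.abs_triangle_ineq)
  also have "\<dots> = (xs a - xs a0) + labs ?q"
    using inc[OF \<open>le a0 a\<close>] by (simp add: lat.abs_of_nonneg lat.abs_minus_commute)
  finally have "labs (xs a - x) * w \<le> (xs a - xs a0) * w + labs ?q * w"
    unfolding distrib_right[symmetric] using \<open>0 \<le> w\<close> by (rule lat.mult_right_mono)
  then have "h (labs (xs a - x) * w) \<le> h ((xs a - xs a0) * w) + h (labs ?q * w)"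
    unfolding h.add[symmetric] by (rule positive_functional_mono[OF h])
  moreover have "h ((xs a - xs a0) * w) \<le> h (?q * w)"
    using increasing_net_le_mw_limit[OF assms(1,2) inc \<open>0 \<le> w\<close> h, of a]
    by (simp add: h.diff left_diff_distrib)
  moreover have "h (?q * w) \<le> h (labs ?q * w)"
    by (rule positive_functional_mono[OF h lat.mult_right_mono[OF lat.abs_ge_self \<open>0 \<le> w\<close>]])
  ultimately show ?thesis
    by linarith
qed

lemma monotone_mw_conv_bound:
  assumes "directed_set le" and "mw_conv xs x (net_filter le)" and "monotone_net le xs"
    and "le a0 a" and "0 \<le> w" and "positive_functional h"
  shows "h (labs (xs a - x) * w) \<le> 2 * h (labs (x - xs a0) * (w::'a))"
proof -
  consider (inc) "\<And>a b. le a b \<Longrightarrow> xs a \<le> xs b" | (dec) "\<And>a b. le a b \<Longrightarrow> xs b \<le> xs a"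
    using assms(3) unfolding monotone_net_def by blast
  then show ?thesis
  proof cases
    case inc
    from increasing_mw_conv_bound[OF assms(1,2) inc assms(4-6)] show ?thesis .
  next
    case dec
    then have inc_neg: "\<And>a b. le a b \<Longrightarrow> - xs a \<le> - xs b"
      by (simp add: lat.neg_le_iff_le)
    have "mw_conv (\<lambda>i. - xs i) (- x) (net_filter le)"
      using assms(2) by (simp add: mw_conv_def lat.abs_minus_commute)
    from increasing_mw_conv_bound[OF assms(1) this inc_neg assms(4-6)] show ?thesis
      by (simp add: lat.abs_minus_commute)
  qed
qed

lemma abs_mult_diff_le:
  "labs (a * b - x * y) \<le> labs (a - x) * labs (b - y) + labs x * labs (b - y) + labs (a - x) * labs (y::'a)"
proof -
  have "a * b - x * y = (a - x) * (b - y) + x * (b - y) + (a - x) * y"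
    by (simp add: algebra_simps)
  then have "labs (a * b - x * y) \<le> labs ((a - x) * (b - y) + x * (b - y)) + labs ((a - x) * y)"
    by (simp only: lat.abs_triangle_ineq)
  also have "\<dots> \<le> labs ((a - x) * (b - y)) + labs (x * (b - y)) + labs ((a - x) * y)"
    by (intro lat.add_right_mono lat.abs_triangle_ineq)
  also have "\<dots> \<le> labs (a - x) * labs (b - y) + labs x * labs (b - y) + labs (a - x) * labs y"
    by (intro lat.add_mono abs_mult_le)
  finally show ?thesis .
qed

lemma positive_functional_mult_diff_le:
  assumes h: "positive_functional h" and "0 \<le> u"
  shows "h (labs (a * b - x * y) * u) \<le> h (labs (a - x) * (labs (b - y) * u))
    + h (labs x * (labs (b - y) * u)) + h (labs (a - x) * (labs y * (u::'a)))"
proof -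
  interpret h: bounded_linear h
    using h by (simp add: positive_functional_def)
  have "labs (a * b - x * y) * u
      \<le> (labs (a - x) * labs (b - y) + labs x * labs (b - y) + labs (a - x) * labs y) * u"
    by (rule lat.mult_right_mono[OF abs_mult_diff_le \<open>0 \<le> u\<close>])
  then show ?thesis
    using positive_functional_mono[OF h] by (simp add: h.add[symmetric] distrib_right mult.assoc)
qed

lemma mw_conv_cross_term_monotone_left:
  fixes xs :: "'i \<Rightarrow> 'a" and ys :: "'j \<Rightarrow> 'a"
  assumes le1: "directed_set le1" and le2: "directed_set le2"
    and mwx: "mw_conv xs x (net_filter le1)" and mwy: "mw_conv ys y (net_filter le2)"
    and mono: "monotone_net le1 xs" and "0 \<le> u" and h: "positive_functional h"
  shows "((\<lambda>p. h (labs (xs (fst p) - x) * (labs (ys (snd p) - y) * u))) \<longlongrightarrow> 0)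
    (net_filter (prod_order le1 le2))"
proof -
  let ?F = "net_filter (prod_order le1 le2)"
  fix a0 \<comment> \<open>any index serves as the base point of the bound\<close>
  have "eventually (\<lambda>p. le1 a0 (fst p)) ?F"
    using filterlim_fst_net_filter[OF le1 le2] eventually_le_net_filter[OF le1]
    by (rule filterlim_iff[THEN iffD1, rule_format])
  then have bound: "eventually (\<lambda>p. h (labs (xs (fst p) - x) * (labs (ys (snd p) - y) * u))
      \<le> 2 * h (labs (x - xs a0) * (labs (ys (snd p) - y) * u))) ?F"
    by (rule eventually_mono)
      (intro monotone_mw_conv_bound[OF le1 mwx mono] lat.mult_nonneg_nonneg h \<open>0 \<le> u\<close>; simp)
  have "((\<lambda>b. h (labs (x - xs a0) * (labs (ys b - y) * u))) \<longlongrightarrow> 0) (net_filter le2)"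
    using mwy[unfolded mw_conv_iff_positive_functionals, rule_format, OF \<open>0 \<le> u\<close>
        positive_functional_mult_left[OF h lat.abs_ge_zero]] .
  then have lim: "((\<lambda>p. 2 * h (labs (x - xs a0) * (labs (ys (snd p) - y) * u))) \<longlongrightarrow> 0) ?F"
    using filterlim_compose[OF _ filterlim_snd_net_filter[OF le1 le2]] tendsto_mult_right_zero
    by blast
  have "\<forall>p. 0 \<le> h (labs (xs (fst p) - x) * (labs (ys (snd p) - y) * u))"
    using h \<open>0 \<le> u\<close> by (simp add: positive_functional_def lat.mult_nonneg_nonneg)
  from tendsto_sandwich[OF always_eventually[OF this] bound tendsto_const lim] show ?thesis .
qed

lemma mw_conv_cross_term_monotone_right:
  fixes xs :: "'i \<Rightarrow> 'a" and ys :: "'j \<Rightarrow> 'a"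
  assumes le1: "directed_set le1" and le2: "directed_set le2"
    and mwx: "mw_conv xs x (net_filter le1)" and mwy: "mw_conv ys y (net_filter le2)"
    and mono: "monotone_net le2 ys" and "0 \<le> u" and h: "positive_functional h"
  shows "((\<lambda>p. h (labs (xs (fst p) - x) * (labs (ys (snd p) - y) * u))) \<longlongrightarrow> 0)
    (net_filter (prod_order le1 le2))"
proof -
  let ?F = "net_filter (prod_order le1 le2)"
  fix b0
  have "eventually (\<lambda>p. le2 b0 (snd p)) ?F"
    using filterlim_snd_net_filter[OF le1 le2] eventually_le_net_filter[OF le2]
    by (rule filterlim_iff[THEN iffD1, rule_format])
  then have bound: "eventually (\<lambda>p. h (labs (xs (fst p) - x) * (labs (ys (snd p) - y) * u))
      \<le> 2 * h (labs (xs (fst p) - x) * (labs (y - ys b0) * u))) ?F"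
    by (rule eventually_mono)
      (intro monotone_mw_conv_bound[OF le2 mwy mono _ \<open>0 \<le> u\<close>
        positive_functional_mult_left[OF h]]; simp)
  have "((\<lambda>a. h (labs (xs a - x) * (labs (y - ys b0) * u))) \<longlongrightarrow> 0) (net_filter le1)"
    using mwx \<open>0 \<le> u\<close> h
    unfolding mw_conv_iff_positive_functionals by (simp add: lat.mult_nonneg_nonneg)
  then have lim: "((\<lambda>p. 2 * h (labs (xs (fst p) - x) * (labs (y - ys b0) * u))) \<longlongrightarrow> 0) ?F"
    using filterlim_compose[OF _ filterlim_fst_net_filter[OF le1 le2]] tendsto_mult_right_zero
    by blast
  have "\<forall>p. 0 \<le> h (labs (xs (fst p) - x) * (labs (ys (snd p) - y) * u))"
    using h \<open>0 \<le> u\<close> by (simp add: positive_functional_def lat.mult_nonneg_nonneg)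
  from tendsto_sandwich[OF always_eventually[OF this] bound tendsto_const lim] show ?thesis .
qed

lemma mw_conv_mult:
  fixes xs :: "'i \<Rightarrow> 'a" and ys :: "'j \<Rightarrow> 'a"
  assumes le1: "directed_set le1" and le2: "directed_set le2"
    and mwx: "mw_conv xs x (net_filter le1)" and mwy: "mw_conv ys y (net_filter le2)"
    and mono: "monotone_net le1 xs \<or> monotone_net le2 ys"
  shows "mw_conv (\<lambda>(a, b). xs a * ys b) (x * y) (net_filter (prod_order le1 le2))"
  unfolding mw_conv_iff_positive_functionals case_prod_unfold
proof (intro allI impI)
  fix u :: 'a and h :: "'a \<Rightarrow> real"
  assume "0 \<le> u" and h: "positive_functional h"
  let ?F = "net_filter (prod_order le1 le2)"
  let ?A = "\<lambda>p. labs (xs (fst p) - x)" and ?B = "\<lambda>p. labs (ys (snd p) - y)"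
  have cross: "((\<lambda>p. h (?A p * (?B p * u))) \<longlongrightarrow> 0) ?F"
    using mono mw_conv_cross_term_monotone_left[OF le1 le2 mwx mwy _ \<open>0 \<le> u\<close> h]
      mw_conv_cross_term_monotone_right[OF le1 le2 mwx mwy _ \<open>0 \<le> u\<close> h]
    by blast
  have left: "((\<lambda>p. h (labs x * (?B p * u))) \<longlongrightarrow> 0) ?F"
    using mwy[unfolded mw_conv_iff_positive_functionals, rule_format, OF \<open>0 \<le> u\<close>
        positive_functional_mult_left[OF h lat.abs_ge_zero]]
    by (rule filterlim_compose[OF _ filterlim_snd_net_filter[OF le1 le2]])
  have right: "((\<lambda>p. h (?A p * (labs y * u))) \<longlongrightarrow> 0) ?F"
    using mwx[unfolded mw_conv_iff_positive_functionals, rule_format,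
        OF lat.mult_nonneg_nonneg[OF lat.abs_ge_zero \<open>0 \<le> u\<close>] h]
    by (rule filterlim_compose[OF _ filterlim_fst_net_filter[OF le1 le2]])
  have lim: "((\<lambda>p. h (?A p * (?B p * u)) + h (labs x * (?B p * u)) + h (?A p * (labs y * u)))
      \<longlongrightarrow> 0) ?F"
    using tendsto_add[OF tendsto_add[OF cross left] right] by simp
  have "\<forall>p. 0 \<le> h (labs (xs (fst p) * ys (snd p) - x * y) * u)"
    using h \<open>0 \<le> u\<close> by (simp add: positive_functional_def lat.mult_nonneg_nonneg)
  moreover have "\<forall>p. h (labs (xs (fst p) * ys (snd p) - x * y) * u)
      \<le> h (?A p * (?B p * u)) + h (labs x * (?B p * u)) + h (?A p * (labs y * u))"
    using positive_functional_mult_diff_le[OF h \<open>0 \<le> u\<close>] by blast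
  ultimately show "((\<lambda>p. h (labs (xs (fst p) * ys (snd p) - x * y) * u)) \<longlongrightarrow> 0) ?F"
    by (rule tendsto_sandwich[OF always_eventually always_eventually tendsto_const lim])
qed

end

theorem proposition2p7:
  fixes le :: "'i \<Rightarrow> 'i \<Rightarrow> bool"
    and xs ys :: "'i \<Rightarrow> 'a::{real_normed_algebra, banach, lattice}"
    and x y :: 'a
  assumes "banach_f_algebra TYPE('a)"
    and "directed_set le"
    and "mw_conv xs x (net_filter le)"
    and "mw_conv ys y (net_filter le)"
    and "monotone_net le xs \<or> monotone_net le ys"
  shows "mw_conv (\<lambda>(a, b). xs a * ys b) (x * y) (net_filter (prod_order le le))"
  by (rule normed_lattice_algebra.mw_conv_mult
      [OF banach_f_algebra_normed_lattice_algebra[OF assms(1)] assms(2) assms(2-5)])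

end
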